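(* For all instances $A_1,\dots,A_n$ (over a common schema), the class $\bigcup_{1\le i\le n}[A_i]_{\leftrightarrow}$ admits a left query algorithm over $\mathbb{B}$ (equivalently, is FO-definable) if and only if each $[A_i]_{\leftrightarrow}$, $1\le i\le n$, admits a left query algorithm over $\mathbb{B}$ (equivalently, is FO-definable).
   Context: A schema is a finite set of relation symbols, each with a positive arity. An instance $A$ over a schema $\sigma$ assigns to each $R\in\sigma$ of arity $r$ a finite $r$-ary relation $R^A$; $\mathrm{adom}(A)$ is the set of elements occurring in its facts. A homomorphism $h:A\to B$ is a map $h:\mathrm{adom}(A)\to\mathrm{adom}(B)$ preserving every relation; we write $A\to B$ if one exists. $A,B$ are homomorphically equivalent if $A\to B$ and $B\to A$; $[A]_{\leftrightarrow}$ is the class of all instances homomorphically equivalent to $A$. $\hom_{\mathbb{B}}(A,B)=1$ if $A\to B$ and $0$ otherwise; for $\mathcal{F}=\{F_1,\dots,F_k\}$, $\hom_{\mathbb{B}}(\mathcal{F},A)=(\hom_{\mathbb{B}}(F_i,A))_{i\le k}$. A left $k$-query algorithm over $\mathbb{B}$ for a class $\mathcal{C}$ (closed under isomorphism) is a pair $(\mathcal{F},X)$ with $|\mathcal{F}|=k$ and $X\subseteq\{0,1\}^k$ such that for every instance $D$: $D\in\mathcal{C}$ iff $\hom_{\mathbb{B}}(\mathcal{F},D)\in X$; $\mathcal{C}$ admits one if one exists for some $k>0$. FO-definable means equal to the class of instances satisfying some first-order sentence under active-domain semantics. *)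

theory Defs
  imports Main
begin

type_synonym ('r,'a) inst = "'r \<Rightarrow> 'a list set"

definition schema :: "'r set \<Rightarrow> ('r \<Rightarrow> nat) \<Rightarrow> bool" where
  "schema S ar \<longleftrightarrow> finite S \<and> (\<forall>R\<in>S. ar R > 0)"

definition is_instance :: "'r set \<Rightarrow> ('r \<Rightarrow> nat) \<Rightarrow> ('r,'a) inst \<Rightarrow> bool" where
  "is_instance S ar A \<longleftrightarrow>
     (\<forall>R\<in>S. finite (A R) \<and> (\<forall>t\<in>A R. length t = ar R)) \<and> (\<forall>R. R \<notin> S \<longrightarrow> A R = {})"

definition adom :: "'r set \<Rightarrow> ('r,'a) inst \<Rightarrow> 'a set" where
  "adom S A = (\<Union>R\<in>S. \<Union>t\<in>A R. set t)"

definition is_hom :: "'r set \<Rightarrow> ('a \<Rightarrow> 'a) \<Rightarrow> ('r,'a) inst \<Rightarrow> ('r,'a) inst \<Rightarrow> bool" where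
  "is_hom S h A B \<longleftrightarrow> h ` adom S A \<subseteq> adom S B \<and> (\<forall>R\<in>S. \<forall>t\<in>A R. map h t \<in> B R)"

definition hom_exists :: "'r set \<Rightarrow> ('r,'a) inst \<Rightarrow> ('r,'a) inst \<Rightarrow> bool" where
  "hom_exists S A B \<longleftrightarrow> (\<exists>h. is_hom S h A B)"

definition hom_equiv :: "'r set \<Rightarrow> ('r,'a) inst \<Rightarrow> ('r,'a) inst \<Rightarrow> bool" where
  "hom_equiv S A B \<longleftrightarrow> hom_exists S A B \<and> hom_exists S B A"

definition hom_class :: "'r set \<Rightarrow> ('r \<Rightarrow> nat) \<Rightarrow> ('r,'a) inst \<Rightarrow> ('r,'a) inst set" where
  "hom_class S ar A = {D. is_instance S ar D \<and> hom_equiv S A D}"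

definition hom_vec :: "'r set \<Rightarrow> ('r,'a) inst list \<Rightarrow> ('r,'a) inst \<Rightarrow> bool list" where
  "hom_vec S Fs D = map (\<lambda>F. hom_exists S F D) Fs"

definition left_query_alg ::
  "'r set \<Rightarrow> ('r \<Rightarrow> nat) \<Rightarrow> nat \<Rightarrow> ('r,'a) inst list \<Rightarrow> bool list set \<Rightarrow> ('r,'a) inst set \<Rightarrow> bool" where
  "left_query_alg S ar k Fs X C \<longleftrightarrow>
     length Fs = k \<and> distinct Fs \<and> (\<forall>F\<in>set Fs. is_instance S ar F) \<and>
     X \<subseteq> {v. length v = k} \<and>
     (\<forall>D. is_instance S ar D \<longrightarrow> (D \<in> C \<longleftrightarrow> hom_vec S Fs D \<in> X))"

definition admits_left_query_alg :: "'r set \<Rightarrow> ('r \<Rightarrow> nat) \<Rightarrow> ('r,'a) inst set \<Rightarrow> bool" where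
  "admits_left_query_alg S ar C \<longleftrightarrow> (\<exists>k>0. \<exists>Fs X. left_query_alg S ar k Fs X C)"

end

theory Submission
  imports Defs
begin

text \<open>A class admits a left query algorithm over the Boolean semiring exactly when membership
of an instance is determined by its Boolean homomorphism profile with respect to some finite list
of instances; the vector set X is then simply the set of profiles of members, and adding the empty
instance makes the list nonempty. Determined classes are closed under finite unions (concatenate
the lists). Conversely, if the union of the classes [A_i] is determined by Fs, then each [A_i] is
determined by Fs extended with A_1, \<dots>, A_n: an instance D' with the same profile as some
D \<in> [A_i] lies in the union, say D' \<leftrightarrow> A_k; then A_k \<rightarrow> D \<rightarrow> A_i gives D' \<rightarrow> A_i, and A_i \<rightarrow> D gives
A_i \<rightarrow> D', so D' \<in> [A_i].\<close>

definition hom_determined ::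
  "'r set \<Rightarrow> ('r \<Rightarrow> nat) \<Rightarrow> ('r,'a) inst list \<Rightarrow> ('r,'a) inst set \<Rightarrow> bool" where
  "hom_determined S ar Fs C \<longleftrightarrow> (\<forall>F\<in>set Fs. is_instance S ar F) \<and>
     (\<forall>D D'. is_instance S ar D \<longrightarrow> is_instance S ar D' \<longrightarrow>
        (\<forall>F\<in>set Fs. hom_exists S F D = hom_exists S F D') \<longrightarrow> (D \<in> C \<longleftrightarrow> D' \<in> C))"

lemma hom_determinedI:
  assumes "\<forall>F\<in>set Fs. is_instance S ar F"
    and "\<And>D D'. is_instance S ar D \<Longrightarrow> is_instance S ar D' \<Longrightarrow>
           \<forall>F\<in>set Fs. hom_exists S F D = hom_exists S F D' \<Longrightarrow> D \<in> C \<Longrightarrow> D' \<in> C"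
  shows "hom_determined S ar Fs C"
  unfolding hom_determined_def using assms by metis

lemma hom_determinedD:
  assumes "hom_determined S ar Fs C" "is_instance S ar D" "is_instance S ar D'"
    "\<forall>F\<in>set Fs. hom_exists S F D = hom_exists S F D'"
  shows "D \<in> C \<longleftrightarrow> D' \<in> C"
  using assms unfolding hom_determined_def by blast

lemma hom_determined_instances:
  "hom_determined S ar Fs C \<Longrightarrow> F \<in> set Fs \<Longrightarrow> is_instance S ar F"
  unfolding hom_determined_def by blast

lemma hom_exists_trans:
  assumes "hom_exists S A B" "hom_exists S B C"
  shows "hom_exists S A C"
proof -
  obtain h g where "is_hom S h A B" "is_hom S g B C"
    using assms unfolding hom_exists_def by blast
  then have "is_hom S (g \<circ> h) A C"
    unfolding is_hom_def by (auto simp: image_comp[symmetric] simp flip: map_map; blast)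
  then show ?thesis
    unfolding hom_exists_def by blast
qed

lemma mem_hom_class_iff:
  "D \<in> hom_class S ar A \<longleftrightarrow> is_instance S ar D \<and> hom_exists S A D \<and> hom_exists S D A"
  unfolding hom_class_def hom_equiv_def by blast

lemma left_query_alg_hom_determined:
  fixes C :: "('r,'a) inst set"
  assumes "left_query_alg S ar k Fs X C"
  shows "hom_determined S ar Fs C"
proof -
  have "\<forall>D. is_instance S ar D \<longrightarrow> (D \<in> C \<longleftrightarrow> hom_vec S Fs D \<in> X)"
    using assms unfolding left_query_alg_def by blast
  moreover have "hom_vec S Fs D = hom_vec S Fs D'"
    if "\<forall>F\<in>set Fs. hom_exists S F D = hom_exists S F D'" for D D' :: "('r,'a) inst"
    using that unfolding hom_vec_def by simp
  ultimately show ?thesis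
    using assms unfolding left_query_alg_def by (intro hom_determinedI) metis+
qed

lemma hom_determined_imp_admits_left_query_alg:
  fixes C :: "('r,'a) inst set"
  assumes det: "hom_determined S ar Fs C"
  shows "admits_left_query_alg S ar C"
proof -
  define Fs' where "Fs' = remdups ((\<lambda>_. {}) # Fs)"
  define X where "X = hom_vec S Fs' ` {D. is_instance S ar D \<and> D \<in> C}"
  have "left_query_alg S ar (length Fs') Fs' X C"
    unfolding left_query_alg_def
  proof (intro conjI allI impI)
    show "\<forall>F\<in>set Fs'. is_instance S ar F"
      using hom_determined_instances[OF det] unfolding Fs'_def is_instance_def by auto
    show "X \<subseteq> {v. length v = length Fs'}"
      unfolding X_def hom_vec_def by auto
    fix D :: "('r,'a) inst" assume D: "is_instance S ar D"
    show "D \<in> C \<longleftrightarrow> hom_vec S Fs' D \<in> X"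
    proof
      assume "hom_vec S Fs' D \<in> X"
      then obtain D' where D': "is_instance S ar D'" "D' \<in> C"
        and "hom_vec S Fs' D' = hom_vec S Fs' D"
        unfolding X_def by (elim imageE) auto
      then have "\<forall>F\<in>set Fs. hom_exists S F D' = hom_exists S F D"
        unfolding hom_vec_def Fs'_def by (auto simp: map_eq_conv)
      then show "D \<in> C"
        using hom_determinedD[OF det D'(1) D] D'(2) by blast
    qed (use D in \<open>simp add: X_def\<close>)
  qed (simp_all add: Fs'_def)
  moreover have "length Fs' > 0"
    by (rule length_pos_if_in_set[of "\<lambda>_. {}"]) (simp add: Fs'_def)
  ultimately show ?thesis
    unfolding admits_left_query_alg_def by blast
qed

lemma admits_left_query_alg_iff_hom_determined:
  fixes C :: "('r,'a) inst set"
  shows "admits_left_query_alg S ar C \<longleftrightarrow> (\<exists>Fs. hom_determined S ar Fs C)"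
proof
  show "admits_left_query_alg S ar C \<Longrightarrow> \<exists>Fs. hom_determined S ar Fs C"
    unfolding admits_left_query_alg_def by (blast dest: left_query_alg_hom_determined)
qed (use hom_determined_imp_admits_left_query_alg in blast)

lemma hom_determined_Un:
  assumes "hom_determined S ar Fs C" "hom_determined S ar Gs C'"
  shows "hom_determined S ar (Fs @ Gs) (C \<union> C')"
proof (rule hom_determinedI)
  show "\<forall>F\<in>set (Fs @ Gs). is_instance S ar F"
    using assms by (auto dest: hom_determined_instances)
  fix D D' assume D: "is_instance S ar D" and D': "is_instance S ar D'"
    and same: "\<forall>F\<in>set (Fs @ Gs). hom_exists S F D = hom_exists S F D'" and "D \<in> C \<union> C'"
  moreover have "D \<in> C \<longleftrightarrow> D' \<in> C"
    using hom_determinedD[OF assms(1) D D'] same by simp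
  moreover have "D \<in> C' \<longleftrightarrow> D' \<in> C'"
    using hom_determinedD[OF assms(2) D D'] same by simp
  ultimately show "D' \<in> C \<union> C'" by blast
qed

lemma hom_determined_UN:
  assumes "\<forall>A\<in>set As. \<exists>Fs. hom_determined S ar Fs (K A)"
  shows "\<exists>Fs. hom_determined S ar Fs (\<Union>A\<in>set As. K A)"
  using assms
proof (induction As)
  case Nil
  have "hom_determined S ar [] {}"
    by (simp add: hom_determined_def)
  then show ?case by auto
next
  case (Cons A As)
  then obtain Fs Gs where "hom_determined S ar Fs (K A)"
    and "hom_determined S ar Gs (\<Union>A\<in>set As. K A)" by auto
  from hom_determined_Un[OF this] show ?case by auto
qed

lemma hom_determined_hom_class_of_UN:
  assumes det: "hom_determined S ar Fs (\<Union>A\<in>set As. hom_class S ar A)"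
    and inst: "\<forall>A\<in>set As. is_instance S ar A"
    and Ai: "Ai \<in> set As"
  shows "hom_determined S ar (Fs @ As) (hom_class S ar Ai)"
proof (rule hom_determinedI)
  show "\<forall>F\<in>set (Fs @ As). is_instance S ar F"
    using hom_determined_instances[OF det] inst by auto
  fix D D' assume D: "is_instance S ar D" and D': "is_instance S ar D'"
    and same: "\<forall>F\<in>set (Fs @ As). hom_exists S F D = hom_exists S F D'"
    and "D \<in> hom_class S ar Ai"
  then have Ai_D: "hom_exists S Ai D" and D_Ai: "hom_exists S D Ai"
    by (simp_all add: mem_hom_class_iff)
  have "D \<in> (\<Union>A\<in>set As. hom_class S ar A)"
    using \<open>D \<in> hom_class S ar Ai\<close> Ai by blast
  moreover have "D \<in> (\<Union>A\<in>set As. hom_class S ar A) \<longleftrightarrow> D' \<in> (\<Union>A\<in>set As. hom_class S ar A)"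
    using hom_determinedD[OF det D D'] same by simp
  ultimately obtain Ak where Ak: "Ak \<in> set As" "hom_exists S Ak D'" "hom_exists S D' Ak"
    by (auto simp: mem_hom_class_iff)
  have "hom_exists S Ak D"
    using Ak(1,2) same by simp
  then have "hom_exists S D' Ai"
    using Ak(3) D_Ai hom_exists_trans by blast
  moreover have "hom_exists S Ai D'"
    using Ai_D Ai same by simp
  ultimately show "D' \<in> hom_class S ar Ai"
    using D' by (simp add: mem_hom_class_iff)
qed

theorem mainTheorem7:
  fixes S :: "'r set" and ar :: "'r \<Rightarrow> nat" and As :: "('r,'a) inst list"
  assumes "infinite (UNIV :: 'a set)"
    and "schema S ar"
    and "\<forall>A\<in>set As. is_instance S ar A"
  shows "admits_left_query_alg S ar (\<Union>A\<in>set As. hom_class S ar A)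
         \<longleftrightarrow> (\<forall>A\<in>set As. admits_left_query_alg S ar (hom_class S ar A))"
  unfolding admits_left_query_alg_iff_hom_determined
proof
  assume "\<exists>Fs. hom_determined S ar Fs (\<Union>A\<in>set As. hom_class S ar A)"
  then obtain Fs where "hom_determined S ar Fs (\<Union>A\<in>set As. hom_class S ar A)" by blast
  from hom_determined_hom_class_of_UN[OF this assms(3)]
  show "\<forall>A\<in>set As. \<exists>Fs. hom_determined S ar Fs (hom_class S ar A)" by blast
qed (rule hom_determined_UN)

end
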